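(* Let $k$ be a finite field and, for $j\ge0$, let $c_j$ denote the number of conjugacy classes of $GL_j(k)$ (with $GL_0(k)$ the trivial group, so $c_0=1$). Then the number of conjugacy classes of $AGL_n(k)$ equals $c_n + c_{n-1} + \dots + c_0$.
   Context: $AGL_n(k)$ is the affine general linear group, the semidirect product of $GL_n(k)$ with the row space $(k^n)^t$, realized as the matrices $\begin{pmatrix}1 & u\\ 0 & A\end{pmatrix}$ with $u\in (k^n)^t$ and $A\in GL_n(k)$. *)

theory Defs
  imports "Jordan_Normal_Form.Matrix" "HOL-Algebra.Group"
begin

definition GL_group :: "nat \<Rightarrow> 'a::field mat monoid" where
  "GL_group n = \<lparr> carrier = {A \<in> carrier_mat n n. invertible_mat A},
                  mult = (\<lambda>A B. A * B), one = 1\<^sub>m n \<rparr>"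

definition AGL_group :: "nat \<Rightarrow> 'a::field mat monoid" where
  "AGL_group n = \<lparr> carrier = {four_block_mat (1\<^sub>m 1) u (0\<^sub>m n 1) A | u A.
                                 u \<in> carrier_mat 1 n \<and> A \<in> carrier (GL_group n)},
                   mult = (\<lambda>A B. A * B), one = 1\<^sub>m (Suc n) \<rparr>"

definition conj_classes :: "('g, 'b) monoid_scheme \<Rightarrow> 'g set set" where
  "conj_classes G = (\<lambda>x. {g \<otimes>\<^bsub>G\<^esub> x \<otimes>\<^bsub>G\<^esub> inv\<^bsub>G\<^esub> g | g. g \<in> carrier G}) ` carrier G"

end

(*
  Write c(G) for the number of conjugacy classes of G and q = |k|. By the class equation
  (Burnside's lemma for the conjugation action), c(G) |G| is the number of commuting pairs in G.

  An element of AGL_n is a pair (x, A) of a translation row x and A in GL_n, and (x, A), (y, B)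
  commute iff AB = BA and y + B^T x = x + A^T y. Since a matrix and its transpose have the same
  rank, for commuting A, B this linear system has q^n times as many solutions as A and B have
  common fixed vectors. Summing over the commuting pairs of GL_n and exchanging the two sums,

    c(AGL_n) |GL_n| = sum over z in k^n of #(commuting pairs in the stabilizer of z).

  The zero vector contributes c(GL_n) |GL_n|. The nonzero vectors form one GL_n-orbit whose
  stabilizers are conjugate to the stabilizer AGL_(n-1) of e_0, so by the orbit-stabilizer
  theorem they contribute c(AGL_(n-1)) |GL_n|. Hence c(AGL_n) = c(GL_n) + c(AGL_(n-1)).
*)

theory Submission
  imports Defs "HOL-Library.Cardinality" "Jordan_Normal_Form.Determinant"
    "HOL-Algebra.Group_Action"
begin

section \<open>Double counting\<close>

lemma sum_card_filter_swap:
  assumes "finite X" "finite Y"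
  shows "(\<Sum>x\<in>X. card {y \<in> Y. R x y}) = (\<Sum>y\<in>Y. card {x \<in> X. R x y})"
proof -
  have "card {y \<in> Y. R x y} = (\<Sum>y\<in>Y. of_bool (R x y))" for x
    using assms(2) by (simp add: Int_def conj_commute)
  moreover have "card {x \<in> X. R x y} = (\<Sum>x\<in>X. of_bool (R x y))" for y
    using assms(1) by (simp add: Int_def conj_commute)
  ultimately show ?thesis
    by (simp only: sum.swap[of _ X Y])
qed

lemma sum_card_zeros_of_pairing:
  fixes \<beta> :: "'x \<Rightarrow> 'y \<Rightarrow> 'z::zero" and q :: nat
  assumes "finite X" "0 < q"
    and "\<And>x. x \<in> X \<Longrightarrow> (\<forall>y\<in>Y. \<beta> x y = 0) \<or> q * card {y \<in> Y. \<beta> x y = 0} = card Y"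
  shows "q * (\<Sum>x\<in>X. card {y \<in> Y. \<beta> x y = 0})
    = card X * card Y + (q - 1) * card Y * card {x \<in> X. \<forall>y\<in>Y. \<beta> x y = 0}"
proof -
  have "q * card {y \<in> Y. \<beta> x y = 0} = card Y + (q - 1) * card Y * of_bool (\<forall>y\<in>Y. \<beta> x y = 0)"
    if "x \<in> X" for x
  proof (cases "\<forall>y\<in>Y. \<beta> x y = 0")
    case True
    then have "{y \<in> Y. \<beta> x y = 0} = Y" by auto
    with True \<open>0 < q\<close> show ?thesis by (simp add: algebra_simps)
  qed (use assms(3)[OF that] in auto)
  then have "q * (\<Sum>x\<in>X. card {y \<in> Y. \<beta> x y = 0})
      = (\<Sum>x\<in>X. card Y + (q - 1) * card Y * of_bool (\<forall>y\<in>Y. \<beta> x y = 0))"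
    by (simp add: sum_distrib_left)
  also have "\<dots> = card X * card Y + (q - 1) * card Y * card {x \<in> X. \<forall>y\<in>Y. \<beta> x y = 0}"
    using \<open>finite X\<close> by (simp add: sum.distrib sum_distrib_left[symmetric] Int_def conj_commute)
  finally show ?thesis .
qed

lemma card_radicals_of_pairing:
  fixes \<beta> :: "'x \<Rightarrow> 'y \<Rightarrow> 'z::zero" and q :: nat
  assumes "finite X" "finite Y" "1 < q"
    and "\<And>x. x \<in> X \<Longrightarrow> (\<forall>y\<in>Y. \<beta> x y = 0) \<or> q * card {y \<in> Y. \<beta> x y = 0} = card Y"
    and "\<And>y. y \<in> Y \<Longrightarrow> (\<forall>x\<in>X. \<beta> x y = 0) \<or> q * card {x \<in> X. \<beta> x y = 0} = card X"
  shows "card {x \<in> X. \<forall>y\<in>Y. \<beta> x y = 0} * card Y = card {y \<in> Y. \<forall>x\<in>X. \<beta> x y = 0} * card X"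
proof -
  let ?L = "card {x \<in> X. \<forall>y\<in>Y. \<beta> x y = 0}" and ?R = "card {y \<in> Y. \<forall>x\<in>X. \<beta> x y = 0}"
  have "card X * card Y + (q - 1) * card Y * ?L = q * (\<Sum>x\<in>X. card {y \<in> Y. \<beta> x y = 0})"
    by (rule sum_card_zeros_of_pairing[symmetric]) (use assms in auto)
  also have "\<dots> = q * (\<Sum>y\<in>Y. card {x \<in> X. \<beta> x y = 0})"
    by (simp only: sum_card_filter_swap[OF assms(1,2)])
  also have "\<dots> = card Y * card X + (q - 1) * card X * ?R"
    by (rule sum_card_zeros_of_pairing) (use assms in auto)
  finally have "(q - 1) * (?L * card Y) = (q - 1) * (?R * card X)"
    by (simp add: ac_simps)
  then show ?thesis
    using \<open>1 < q\<close> by simp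
qed

section \<open>Vectors and matrices over a finite field\<close>

lemma card_carrier_vec: "card (carrier_vec n :: 'a::finite vec set) = CARD('a) ^ n"
  and finite_carrier_vec [simp]: "finite (carrier_vec n :: 'a::finite vec set)"
proof -
  have bij: "bij_betw list_of_vec (carrier_vec n) {xs :: 'a list. set xs \<subseteq> UNIV \<and> length xs = n}"
  proof (rule bij_betwI[of _ _ _ vec_of_list])
    show "vec_of_list \<in> {xs :: 'a list. set xs \<subseteq> UNIV \<and> length xs = n} \<rightarrow> carrier_vec n"
      by (auto intro: carrier_vecI)
  qed (auto simp: vec_list list_vec)
  then show "card (carrier_vec n :: 'a vec set) = CARD('a) ^ n"
    using card_lists_length_eq[of "UNIV :: 'a set" n] by (simp add: bij_betw_same_card)
  show "finite (carrier_vec n :: 'a vec set)"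
    using bij_betw_finite[OF bij] finite_lists_length_eq[of "UNIV :: 'a set" n] by simp
qed

lemma finite_carrier_mat [simp]: "finite (carrier_mat nr nc :: 'a::finite mat set)"
proof -
  have "carrier_mat nr nc \<subseteq> mat_of_rows nc ` {rs. set rs \<subseteq> (carrier_vec nc :: 'a vec set) \<and> length rs = nr}"
  proof
    fix A :: "'a mat" assume A: "A \<in> carrier_mat nr nc"
    then have "A = mat_of_rows nc (rows A)"
      using mat_of_rows_rows[of A] by simp
    moreover have "set (rows A) \<subseteq> carrier_vec nc" "length (rows A) = nr"
      using A by (auto simp: rows_def)
    ultimately show "A \<in> mat_of_rows nc ` {rs. set rs \<subseteq> carrier_vec nc \<and> length rs = nr}"
      by blast
  qed
  moreover have "finite (mat_of_rows nc ` {rs. set rs \<subseteq> (carrier_vec nc :: 'a vec set) \<and> length rs = nr})"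
    by (intro finite_imageI finite_lists_length_eq finite_carrier_vec)
  ultimately show ?thesis
    by (rule finite_subset)
qed

lemma one_less_card_field: "1 < CARD('a::{finite,field})"
proof -
  have "card {0::'a, 1} \<le> CARD('a)" by (rule card_mono) auto
  then show ?thesis by simp
qed

lemma minus_eq_zero_vec_iff:
  fixes u v :: "'a::ab_group_add vec"
  assumes "u \<in> carrier_vec n" "v \<in> carrier_vec n"
  shows "u - v = 0\<^sub>v n \<longleftrightarrow> u = v"
  using assms by (auto simp: vec_eq_iff)

lemma exists_nonzero_index:
  assumes "v \<in> carrier_vec n" "v \<noteq> 0\<^sub>v n"
  shows "\<exists>i<n. v $ i \<noteq> 0"
  using assms by (auto simp: vec_eq_iff)

lemma scalar_prod_all_zero_iff:
  fixes c :: "'a::semiring_1 vec"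
  assumes "c \<in> carrier_vec n"
  shows "(\<forall>z\<in>carrier_vec n. c \<bullet> z = 0) \<longleftrightarrow> c = 0\<^sub>v (n::nat)"
proof
  assume "\<forall>z\<in>carrier_vec n. c \<bullet> z = 0"
  then have "c $ i = 0" if "i < n" for i
    using scalar_prod_right_unit[OF that, of c] assms that by (metis unit_vec_carrier)
  with assms show "c = 0\<^sub>v n" by (intro eq_vecI) auto
qed (use assms in auto)

lemma card_scalar_prod_eq_le:
  fixes c :: "'a::{finite,field} vec"
  assumes c: "c \<in> carrier_vec n" and i: "i < n" "c $ i \<noteq> 0"
  shows "card {y \<in> carrier_vec n. c \<bullet> y = s} \<le> card {y \<in> carrier_vec n. c \<bullet> y = s'}"
proof (rule card_inj_on_le)
  define a where "a = (s' - s) / c $ i"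
  let ?shift = "\<lambda>y. y + a \<cdot>\<^sub>v unit_vec n i"
  show "inj_on ?shift {y \<in> carrier_vec n. c \<bullet> y = s}"
  proof (rule inj_onI)
    fix y y' assume "y \<in> {y \<in> carrier_vec n. c \<bullet> y = s}" "y' \<in> {y \<in> carrier_vec n. c \<bullet> y = s}"
      and eq: "?shift y = ?shift y'"
    then have y: "y \<in> carrier_vec n" and y': "y' \<in> carrier_vec n" by simp_all
    show "y = y'"
    proof (rule eq_vecI)
      fix j assume "j < dim_vec y'"
      with y' have j: "j < n" by simp
      have "?shift y $ j = ?shift y' $ j" using eq by simp
      with y y' j show "y $ j = y' $ j" by simp
    qed (use y y' in simp)
  qed
  show "?shift ` {y \<in> carrier_vec n. c \<bullet> y = s} \<subseteq> {y \<in> carrier_vec n. c \<bullet> y = s'}"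
  proof (rule image_subsetI)
    fix y assume "y \<in> {y \<in> carrier_vec n. c \<bullet> y = s}"
    then have y: "y \<in> carrier_vec n" and s: "c \<bullet> y = s" by simp_all
    have "c \<bullet> ?shift y = c \<bullet> y + a * (c \<bullet> unit_vec n i)"
      using c y by (simp add: scalar_prod_add_distrib[OF c y])
    also have "\<dots> = s'"
      using i s by (simp add: a_def)
    finally show "?shift y \<in> {y \<in> carrier_vec n. c \<bullet> y = s'}"
      using y by simp
  qed
qed simp

lemma card_scalar_prod_eq:
  fixes c :: "'a::{finite,field} vec"
  assumes c: "c \<in> carrier_vec n" "c \<noteq> 0\<^sub>v n"
  shows "CARD('a) * card {y \<in> carrier_vec n. c \<bullet> y = t} = CARD('a) ^ n"
proof -
  obtain i where i: "i < n" "c $ i \<noteq> 0"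
    using exists_nonzero_index[OF c] by blast
  have "CARD('a) ^ n = card (carrier_vec n :: 'a vec set)"
    by (simp add: card_carrier_vec)
  also have "\<dots> = (\<Sum>y\<in>carrier_vec n. card {s \<in> UNIV. c \<bullet> y = s})"
    by simp
  also have "\<dots> = (\<Sum>s\<in>UNIV. card {y \<in> carrier_vec n. c \<bullet> y = s})"
    by (simp add: sum_card_filter_swap)
  also have "\<dots> = (\<Sum>s\<in>(UNIV::'a set). card {y \<in> carrier_vec n. c \<bullet> y = t})"
    using card_scalar_prod_eq_le[OF c(1) i] by (intro sum.cong refl antisym)
  finally show ?thesis by simp
qed

lemma card_scalar_prod_eq_0_cases:
  fixes c :: "'a::{finite,field} vec"
  assumes "c \<in> carrier_vec n"
  shows "(\<forall>z\<in>carrier_vec n. c \<bullet> z = 0)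
    \<or> CARD('a) * card {z \<in> carrier_vec n. c \<bullet> z = 0} = card (carrier_vec n :: 'a vec set)"
  using assms card_scalar_prod_eq[OF assms] by (cases "c = 0\<^sub>v n") (auto simp: card_carrier_vec)

text \<open>Over a finite field this says that \<open>M\<close> and its transpose have the same rank; it follows by
  counting the zeros of the pairing \<open>x \<bullet> (M *\<^sub>v z)\<close> in two ways.\<close>

lemma card_kernel_transpose:
  fixes M :: "'a::{finite,field} mat"
  assumes M: "M \<in> carrier_mat m n"
  shows "card {x \<in> carrier_vec m. transpose_mat M *\<^sub>v x = 0\<^sub>v n} * CARD('a) ^ n
       = card {z \<in> carrier_vec n. M *\<^sub>v z = 0\<^sub>v m} * CARD('a) ^ m"
proof -
  note dichotomy = card_scalar_prod_eq_0_cases[where 'a = 'a]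
  have left: "x \<bullet> (M *\<^sub>v z) = (transpose_mat M *\<^sub>v x) \<bullet> z"
    if "x \<in> carrier_vec m" "z \<in> carrier_vec n" for x z
    using transpose_vec_mult_scalar[OF M that(2,1)] by simp
  have right: "x \<bullet> (M *\<^sub>v z) = (M *\<^sub>v z) \<bullet> x"
    if "x \<in> carrier_vec m" "z \<in> carrier_vec n" for x z
    using comm_scalar_prod[OF that(1) mult_mat_vec_carrier[OF M that(2)]] .
  have "card {x \<in> carrier_vec m. \<forall>z\<in>carrier_vec n. x \<bullet> (M *\<^sub>v z) = 0} * card (carrier_vec n :: 'a vec set)
      = card {z \<in> carrier_vec n. \<forall>x\<in>carrier_vec m. x \<bullet> (M *\<^sub>v z) = 0} * card (carrier_vec m :: 'a vec set)"
  proof (rule card_radicals_of_pairing[OF finite_carrier_vec finite_carrier_vec one_less_card_field])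
    fix x :: "'a vec" assume x: "x \<in> carrier_vec m"
    have "{z \<in> carrier_vec n. x \<bullet> (M *\<^sub>v z) = 0} = {z \<in> carrier_vec n. (transpose_mat M *\<^sub>v x) \<bullet> z = 0}"
      using left x by auto
    then show "(\<forall>z\<in>carrier_vec n. x \<bullet> (M *\<^sub>v z) = 0)
        \<or> CARD('a) * card {z \<in> carrier_vec n. x \<bullet> (M *\<^sub>v z) = 0} = card (carrier_vec n :: 'a vec set)"
      using dichotomy[of "transpose_mat M *\<^sub>v x" n] left x M by auto
  next
    fix z :: "'a vec" assume z: "z \<in> carrier_vec n"
    have "{x \<in> carrier_vec m. x \<bullet> (M *\<^sub>v z) = 0} = {x \<in> carrier_vec m. (M *\<^sub>v z) \<bullet> x = 0}"
      using right z by auto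
    then show "(\<forall>x\<in>carrier_vec m. x \<bullet> (M *\<^sub>v z) = 0)
        \<or> CARD('a) * card {x \<in> carrier_vec m. x \<bullet> (M *\<^sub>v z) = 0} = card (carrier_vec m :: 'a vec set)"
      using dichotomy[of "M *\<^sub>v z" m] right z M by auto
  qed
  moreover have "{x \<in> carrier_vec m. \<forall>z\<in>carrier_vec n. x \<bullet> (M *\<^sub>v z) = 0}
      = {x \<in> carrier_vec m. transpose_mat M *\<^sub>v x = 0\<^sub>v n}"
    using left scalar_prod_all_zero_iff[of "transpose_mat M *\<^sub>v _" n] M by auto
  moreover have "{z \<in> carrier_vec n. \<forall>x\<in>carrier_vec m. x \<bullet> (M *\<^sub>v z) = 0}
      = {z \<in> carrier_vec n. M *\<^sub>v z = 0\<^sub>v m}"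
    using right scalar_prod_all_zero_iff[of "M *\<^sub>v _" m] M by auto
  ultimately show ?thesis
    by (simp add: card_carrier_vec)
qed

lemma transpose_append_rows_mult_append_vec:
  assumes P: "P \<in> carrier_mat m n" and Q: "Q \<in> carrier_mat l n"
    and x: "x \<in> carrier_vec m" and y: "y \<in> carrier_vec l"
  shows "transpose_mat (P @\<^sub>r Q) *\<^sub>v (x @\<^sub>v y) = transpose_mat P *\<^sub>v x + transpose_mat Q *\<^sub>v y"
proof (rule eq_vecI)
  have PQ: "P @\<^sub>r Q \<in> carrier_mat (m + l) n" using P Q by simp
  fix j assume "j < dim_vec (transpose_mat P *\<^sub>v x + transpose_mat Q *\<^sub>v y)"
  then have j: "j < n" using Q by simp
  have "col (P @\<^sub>r Q) j = col P j @\<^sub>v col Q j"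
    unfolding append_rows_def using P Q j by (subst col_four_block_mat(1)) auto
  then show "(transpose_mat (P @\<^sub>r Q) *\<^sub>v (x @\<^sub>v y)) $ j = (transpose_mat P *\<^sub>v x + transpose_mat Q *\<^sub>v y) $ j"
    using P Q x y j carrier_matD[OF PQ] by (simp add: scalar_prod_append[of _ m _ l])
qed (use P Q in \<open>simp add: append_rows_def\<close>)

lemma card_kernel_transpose_append_rows:
  fixes P Q :: "'a::{finite,field} mat"
  assumes P: "P \<in> carrier_mat m n" and Q: "Q \<in> carrier_mat l n"
  shows "card {(x, y) \<in> carrier_vec m \<times> carrier_vec l. transpose_mat P *\<^sub>v x + transpose_mat Q *\<^sub>v y = 0\<^sub>v n}
           * CARD('a) ^ n
       = card {z \<in> carrier_vec n. P *\<^sub>v z = 0\<^sub>v m \<and> Q *\<^sub>v z = 0\<^sub>v l} * CARD('a) ^ (m + l)"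
proof -
  let ?pairs = "{(x, y) \<in> carrier_vec m \<times> carrier_vec l. transpose_mat P *\<^sub>v x + transpose_mat Q *\<^sub>v y = 0\<^sub>v n}"
  let ?append = "\<lambda>(x, y). x @\<^sub>v y"
  have "inj_on ?append ?pairs"
    by (rule inj_onI) auto
  moreover have "?append ` ?pairs = {w \<in> carrier_vec (m + l). transpose_mat (P @\<^sub>r Q) *\<^sub>v w = 0\<^sub>v n}"
  proof (intro equalityI subsetI)
    fix w assume "w \<in> ?append ` ?pairs"
    then show "w \<in> {w \<in> carrier_vec (m + l). transpose_mat (P @\<^sub>r Q) *\<^sub>v w = 0\<^sub>v n}"
      using transpose_append_rows_mult_append_vec[OF P Q] by auto
  next
    fix w assume w: "w \<in> {w \<in> carrier_vec (m + l). transpose_mat (P @\<^sub>r Q) *\<^sub>v w = 0\<^sub>v n}"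
    then have "w = vec_first w m @\<^sub>v vec_last w l" by simp
    with w show "w \<in> ?append ` ?pairs"
      using transpose_append_rows_mult_append_vec[OF P Q, of "vec_first w m" "vec_last w l"]
      by (intro image_eqI[of _ _ "(vec_first w m, vec_last w l)"]) auto
  qed
  ultimately have "card ?pairs = card {w \<in> carrier_vec (m + l). transpose_mat (P @\<^sub>r Q) *\<^sub>v w = 0\<^sub>v n}"
    using card_image by fastforce
  moreover have "{z \<in> carrier_vec n. (P @\<^sub>r Q) *\<^sub>v z = 0\<^sub>v (m + l)}
      = {z \<in> carrier_vec n. P *\<^sub>v z = 0\<^sub>v m \<and> Q *\<^sub>v z = 0\<^sub>v l}"
  proof -
    have "0\<^sub>v (m + l) = 0\<^sub>v m @\<^sub>v (0\<^sub>v l :: 'a vec)" by auto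
    then show ?thesis
      using P Q by (auto simp: mat_mult_append append_vec_eq[OF mult_mat_vec_carrier[OF P] zero_carrier_vec])
  qed
  ultimately show ?thesis
    using card_kernel_transpose[of "P @\<^sub>r Q" "m + l" n] P Q by simp
qed

section \<open>Commuting pairs\<close>

definition commuting_pairs :: "('a, 'b) monoid_scheme \<Rightarrow> 'a set \<Rightarrow> ('a \<times> 'a) set" where
  "commuting_pairs G H = {(x, y) \<in> H \<times> H. x \<otimes>\<^bsub>G\<^esub> y = y \<otimes>\<^bsub>G\<^esub> x}"

lemma (in group) card_conj_classes_mult_order:
  assumes "finite (carrier G)"
  shows "card (conj_classes G) * order G = card (commuting_pairs G (carrier G))"
proof -
  let ?conj = "\<lambda>g. \<lambda>h \<in> carrier G. g \<otimes> h \<otimes> inv g"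
  interpret conjugation: group_action G "carrier G" ?conj
    by (rule action_by_conjugation)
  have "orbits G (carrier G) ?conj = conj_classes G"
    unfolding orbits_def orbit_def conj_classes_def by auto
  moreover have "invariants (carrier G) ?conj g = {x \<in> carrier G. g \<otimes> x = x \<otimes> g}"
    if "g \<in> carrier G" for g
    using that inv_solve_right'[of _ "g \<otimes> _" g] unfolding invariants_def by auto
  ultimately have "card (conj_classes G) * order G = (\<Sum>g\<in>carrier G. card {x \<in> carrier G. g \<otimes> x = x \<otimes> g})"
    using conjugation.burnside[OF assms assms] by simp
  also have "\<dots> = card (Sigma (carrier G) (\<lambda>g. {x \<in> carrier G. g \<otimes> x = x \<otimes> g}))"
    using assms by simp
  also have "Sigma (carrier G) (\<lambda>g. {x \<in> carrier G. g \<otimes> x = x \<otimes> g}) = commuting_pairs G (carrier G)"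
    unfolding commuting_pairs_def by auto
  finally show ?thesis .
qed

lemma (in group) conjugate_commute_iff:
  assumes "g \<in> carrier G" "x \<in> carrier G" "y \<in> carrier G"
  shows "g \<otimes> x \<otimes> inv g \<otimes> (g \<otimes> y \<otimes> inv g) = g \<otimes> y \<otimes> inv g \<otimes> (g \<otimes> x \<otimes> inv g)
    \<longleftrightarrow> x \<otimes> y = y \<otimes> x"
proof -
  have hom: "g \<otimes> a \<otimes> inv g \<otimes> (g \<otimes> b \<otimes> inv g) = g \<otimes> (a \<otimes> b) \<otimes> inv g"
    if "a \<in> carrier G" "b \<in> carrier G" for a b
  proof -
    have "inv g \<otimes> (g \<otimes> z) = z" if "z \<in> carrier G" for z
      using assms(1) that by (simp add: m_assoc[symmetric])
    then show ?thesis
      using assms(1) that by (simp add: m_assoc)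
  qed
  show ?thesis
    using conjugation_is_inj[OF assms(1), of "x \<otimes> y" "y \<otimes> x"] assms by (auto simp: hom)
qed

lemma (in group) card_commuting_pairs_conjugate:
  assumes g: "g \<in> carrier G" and H: "H \<subseteq> carrier G"
  shows "card (commuting_pairs G ((\<lambda>h. g \<otimes> h \<otimes> inv g) ` H)) = card (commuting_pairs G H)"
proof -
  let ?c = "\<lambda>h. g \<otimes> h \<otimes> inv g"
  note commute_iff = conjugate_commute_iff[OF g]
  have "commuting_pairs G (?c ` H) = (\<lambda>(x, y). (?c x, ?c y)) ` commuting_pairs G H"
  proof (intro equalityI subsetI)
    fix p assume "p \<in> commuting_pairs G (?c ` H)"
    then obtain x y where p: "p = (?c x, ?c y)" and xy: "x \<in> H" "y \<in> H" "?c x \<otimes> ?c y = ?c y \<otimes> ?c x"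
      unfolding commuting_pairs_def by auto
    then have "(x, y) \<in> commuting_pairs G H"
      using H commute_iff[of x y] unfolding commuting_pairs_def by auto
    then show "p \<in> (\<lambda>(x, y). (?c x, ?c y)) ` commuting_pairs G H"
      unfolding p by (rule rev_image_eqI) simp
  next
    fix p assume "p \<in> (\<lambda>(x, y). (?c x, ?c y)) ` commuting_pairs G H"
    then obtain x y where p: "p = (?c x, ?c y)" and xy: "x \<in> H" "y \<in> H" "x \<otimes> y = y \<otimes> x"
      unfolding commuting_pairs_def by auto
    then show "p \<in> commuting_pairs G (?c ` H)"
      using H commute_iff[of x y] unfolding commuting_pairs_def by auto
  qed
  moreover have "inj_on (\<lambda>(x, y). (?c x, ?c y)) (commuting_pairs G H)"
  proof (rule inj_onI, clarsimp)
    fix x y x' y' assume "(x, y) \<in> commuting_pairs G H" "(x', y') \<in> commuting_pairs G H"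
      and "?c x = ?c x'" "?c y = ?c y'"
    with H show "x = x' \<and> y = y'"
      using conjugation_is_inj[OF g, of x x'] conjugation_is_inj[OF g, of y y']
      unfolding commuting_pairs_def by auto
  qed
  ultimately show ?thesis
    by (simp add: card_image)
qed

lemma (in group_action) stabilizer_image_conjugate:
  assumes x: "x \<in> E" and g: "g \<in> carrier G"
  shows "stabilizer G \<phi> (\<phi> g x) = (\<lambda>h. g \<otimes> h \<otimes> inv g) ` stabilizer G \<phi> x"
proof -
  interpret group G
    using group_hom group_hom.axioms(1) by auto
  have gx: "\<phi> g x \<in> E" and inv_gx: "\<phi> (inv g) (\<phi> g x) = x"
    using element_image orbit_sym_aux x g by auto
  show ?thesis
  proof (intro equalityI subsetI)
    fix k assume "k \<in> stabilizer G \<phi> (\<phi> g x)"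
    then have k: "k \<in> carrier G" "\<phi> k (\<phi> g x) = \<phi> g x"
      unfolding stabilizer_def by auto
    have "\<phi> (inv g \<otimes> k \<otimes> g) x = x"
      using k x g gx inv_gx by (simp add: composition_rule)
    moreover have "k = g \<otimes> (inv g \<otimes> k \<otimes> g) \<otimes> inv g"
      using k g by (simp add: m_assoc[symmetric]) (simp add: m_assoc)
    ultimately show "k \<in> (\<lambda>h. g \<otimes> h \<otimes> inv g) ` stabilizer G \<phi> x"
      using k g unfolding stabilizer_def by blast
  next
    fix k assume "k \<in> (\<lambda>h. g \<otimes> h \<otimes> inv g) ` stabilizer G \<phi> x"
    then obtain h where k: "k = g \<otimes> h \<otimes> inv g" and h: "h \<in> carrier G" "\<phi> h x = x"
      unfolding stabilizer_def by auto
    have "\<phi> k (\<phi> g x) = \<phi> g x"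
      using h x g gx inv_gx by (simp add: k composition_rule)
    then show "k \<in> stabilizer G \<phi> (\<phi> g x)"
      using g h unfolding stabilizer_def k by simp
  qed
qed

lemma (in group_action) card_commuting_pairs_stabilizer_orbit:
  assumes "x \<in> E" "y \<in> orbit G \<phi> x"
  shows "card (commuting_pairs G (stabilizer G \<phi> y)) = card (commuting_pairs G (stabilizer G \<phi> x))"
proof -
  interpret group G
    using group_hom group_hom.axioms(1) by auto
  obtain g where "g \<in> carrier G" "y = \<phi> g x"
    using assms(2) unfolding orbit_def by auto
  then show ?thesis
    using stabilizer_image_conjugate card_commuting_pairs_conjugate stabilizer_subset assms(1) by simp
qed

lemma (in group_action) sum_card_common_invariants:
  assumes "finite (carrier G)" "finite E"
  shows "(\<Sum>(g, h)\<in>commuting_pairs G (carrier G). card {x \<in> E. \<phi> g x = x \<and> \<phi> h x = x})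
       = (\<Sum>x\<in>E. card (commuting_pairs G (stabilizer G \<phi> x)))"
proof -
  have "finite (commuting_pairs G (carrier G))"
    using assms(1) unfolding commuting_pairs_def by (auto intro: finite_subset)
  then have "(\<Sum>(g, h)\<in>commuting_pairs G (carrier G). card {x \<in> E. \<phi> g x = x \<and> \<phi> h x = x})
      = (\<Sum>x\<in>E. card {(g, h) \<in> commuting_pairs G (carrier G). \<phi> g x = x \<and> \<phi> h x = x})"
    using sum_card_filter_swap[of _ E "\<lambda>(g, h) x. \<phi> g x = x \<and> \<phi> h x = x"] assms(2)
    by (simp add: case_prod_unfold)
  also have "\<dots> = (\<Sum>x\<in>E. card (commuting_pairs G (stabilizer G \<phi> x)))"
    unfolding commuting_pairs_def stabilizer_def by (intro sum.cong refl arg_cong[where f = card]) auto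
  finally show ?thesis .
qed

section \<open>The general linear group acting on vectors\<close>

lemma GL_group_eq_units_of: "GL_group n = units_of (ring_mat TYPE('a::field) n b)"
proof -
  have "invertible_mat A \<longleftrightarrow> (\<exists>B\<in>carrier_mat n n. B * A = 1\<^sub>m n \<and> A * B = 1\<^sub>m n)"
    if A: "A \<in> carrier_mat n n" for A :: "'a mat"
  proof
    assume "invertible_mat A"
    then obtain B where AB: "A * B = 1\<^sub>m n" and BA: "B * A = 1\<^sub>m (dim_row B)"
      using A unfolding invertible_mat_def inverts_mat_def by auto
    have "dim_col B = n" using arg_cong[OF AB, of dim_col] by simp
    moreover have "dim_row B = n" using arg_cong[OF BA, of dim_col] A by simp
    ultimately show "\<exists>B\<in>carrier_mat n n. B * A = 1\<^sub>m n \<and> A * B = 1\<^sub>m n"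
      using AB BA by auto
  next
    assume "\<exists>B\<in>carrier_mat n n. B * A = 1\<^sub>m n \<and> A * B = 1\<^sub>m n"
    then show "invertible_mat A"
      using A unfolding invertible_mat_def inverts_mat_def by auto
  qed
  then show ?thesis
    unfolding GL_group_def units_of_def Units_def ring_mat_def by auto
qed

lemma group_GL_group: "group (GL_group n :: 'a::field mat monoid)"
  unfolding GL_group_eq_units_of[where b = "()"]
  by (rule monoid.units_group[OF ring.is_monoid[OF ring_mat]])

lemma carrier_GL_group: "carrier (GL_group n) = {A \<in> carrier_mat n n. det A \<noteq> (0::'a::field)}"
proof -
  have "carrier (GL_group n) = Units (ring_mat TYPE('a) n ())"
    unfolding GL_group_eq_units_of[where b = "()"] by (simp add: units_of_def)
  also have "\<dots> = {A \<in> carrier_mat n n. det A \<noteq> 0}"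
  proof (intro equalityI subsetI)
    fix A assume "A \<in> Units (ring_mat TYPE('a) n ())"
    then show "A \<in> {A \<in> carrier_mat n n. det A \<noteq> 0}"
      using unit_imp_det_non_zero[of A n "()"] unfolding Units_def ring_mat_def by simp
  next
    fix A :: "'a mat" assume "A \<in> {A \<in> carrier_mat n n. det A \<noteq> 0}"
    then show "A \<in> Units (ring_mat TYPE('a) n ())"
      by (intro det_non_zero_imp_unit) auto
  qed
  finally show ?thesis .
qed

lemma GL_group_iff_trivial_kernel:
  "A \<in> carrier (GL_group n) \<longleftrightarrow>
     A \<in> carrier_mat n n \<and> (\<forall>v\<in>carrier_vec n. A *\<^sub>v v = 0\<^sub>v n \<longrightarrow> v = (0\<^sub>v n :: 'a::field vec))"
proof -
  have "det A \<noteq> 0 \<longleftrightarrow> (\<forall>v\<in>carrier_vec n. A *\<^sub>v v = 0\<^sub>v n \<longrightarrow> v = 0\<^sub>v n)"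
    if "A \<in> carrier_mat n n" for A :: "'a mat"
    using det_0_iff_vec_prod_zero_field[OF that] by auto
  then show ?thesis
    unfolding carrier_GL_group by auto
qed

lemma GL_group_carrier_mat: "A \<in> carrier (GL_group n) \<Longrightarrow> A \<in> carrier_mat n n"
  by (simp add: carrier_GL_group)

lemma GL_group_simps [simp]:
  "A \<otimes>\<^bsub>GL_group n\<^esub> B = A * B" "\<one>\<^bsub>GL_group n\<^esub> = 1\<^sub>m n"
  unfolding GL_group_def by simp_all

lemma finite_carrier_GL_group: "finite (carrier (GL_group n :: 'a::{finite,field} mat monoid))"
  unfolding carrier_GL_group by simp

lemma order_GL_group_pos: "0 < order (GL_group n :: 'a::{finite,field} mat monoid)"
  using monoid.order_gt_0_iff_finite[OF group.is_monoid[OF group_GL_group]] finite_carrier_GL_group by blast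

text \<open>Restricted to \<open>carrier_vec n\<close>, because elements of \<open>BijGroup\<close> are extensional.\<close>

definition mat_action :: "nat \<Rightarrow> 'a::field mat \<Rightarrow> 'a vec \<Rightarrow> 'a vec" where
  "mat_action n A = (\<lambda>v \<in> carrier_vec n. A *\<^sub>v v)"

lemma mat_action_apply [simp]: "v \<in> carrier_vec n \<Longrightarrow> mat_action n A v = A *\<^sub>v v"
  by (simp add: mat_action_def)

lemma mat_action_Bij:
  assumes A: "A \<in> carrier (GL_group n)"
  shows "mat_action n A \<in> Bij (carrier_vec n)"
proof -
  interpret GL: group "GL_group n :: 'a mat monoid"
    by (rule group_GL_group)
  let ?B = "inv\<^bsub>GL_group n\<^esub> A"
  have A': "A \<in> carrier_mat n n" and B: "?B \<in> carrier_mat n n" "?B * A = 1\<^sub>m n" "A * ?B = 1\<^sub>m n"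
    using A GL.l_inv GL.r_inv GL.inv_closed[OF A] by (auto simp: carrier_GL_group)
  have "bij_betw (mat_action n A) (carrier_vec n) (carrier_vec n)"
  proof (rule bij_betwI[of _ _ _ "mat_action n ?B"])
    fix v :: "'a vec" assume v: "v \<in> carrier_vec n"
    show "mat_action n ?B (mat_action n A v) = v" "mat_action n A (mat_action n ?B v) = v"
      using v A' B by (simp_all add: assoc_mult_mat_vec[symmetric, of _ n n _ n])
  qed (use A' B in auto)
  then show ?thesis
    unfolding Bij_def mat_action_def by simp
qed

lemma mat_action_mult:
  assumes "A \<in> carrier_mat n n" "B \<in> carrier_mat n n"
  shows "mat_action n (A * B) = compose (carrier_vec n) (mat_action n A) (mat_action n B)"
proof
  fix v :: "'a vec"
  show "mat_action n (A * B) v = compose (carrier_vec n) (mat_action n A) (mat_action n B) v"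
    using assms by (cases "v \<in> carrier_vec n") (simp_all add: compose_def mat_action_def assoc_mult_mat_vec[of _ n n _ n])
qed

lemma group_action_mat_action:
  "group_action (GL_group n :: 'a::field mat monoid) (carrier_vec n) (mat_action n)"
proof -
  have "mat_action n (A * B) = compose (carrier_vec n) (mat_action n A) (mat_action n B)"
    if "A \<in> carrier (GL_group n)" "B \<in> carrier (GL_group n)" for A B :: "'a mat"
    using that by (simp add: carrier_GL_group mat_action_mult)
  then have "mat_action n \<in> hom (GL_group n :: 'a mat monoid) (BijGroup (carrier_vec n))"
    by (intro homI) (simp_all add: BijGroup_def mat_action_Bij)
  then show ?thesis
    unfolding group_action_def group_hom_def group_hom_axioms_def
    using group_GL_group group_BijGroup by blast
qed

abbreviation GL_stabilizer :: "nat \<Rightarrow> 'a::field vec \<Rightarrow> 'a mat set" where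
  "GL_stabilizer n z \<equiv> stabilizer (GL_group n) (mat_action n) z"

lemma GL_stabilizer_zero_vec:
  "GL_stabilizer n (0\<^sub>v n) = carrier (GL_group n :: 'a::field mat monoid)"
  unfolding stabilizer_def carrier_GL_group by auto

lemma rank_one_update_mult_vec:
  fixes a b v :: "'a::comm_ring_1 vec"
  assumes a: "a \<in> carrier_vec n" and b: "b \<in> carrier_vec n" and v: "v \<in> carrier_vec n"
  shows "(1\<^sub>m n + mat n n (\<lambda>(i, j). a $ i * b $ j)) *\<^sub>v v = v + (b \<bullet> v) \<cdot>\<^sub>v a"
proof (rule eq_vecI)
  let ?R = "mat n n (\<lambda>(i, j). a $ i * b $ j)"
  fix i assume "i < dim_vec (v + (b \<bullet> v) \<cdot>\<^sub>v a)"
  then have i: "i < n" using a by simp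
  have "row ?R i = a $ i \<cdot>\<^sub>v b"
    using b i by (intro eq_vecI) auto
  then have "(?R *\<^sub>v v) $ i = a $ i * (b \<bullet> v)"
    using b v i by simp
  then show "((1\<^sub>m n + ?R) *\<^sub>v v) $ i = (v + (b \<bullet> v) \<cdot>\<^sub>v a) $ i"
    using a v i by (simp add: add_mult_distrib_mat_vec[of _ n n] mult.commute)
qed (use a in simp)

lemma rank_one_update_GL:
  fixes a b :: "'a::field vec"
  assumes a: "a \<in> carrier_vec n" and b: "b \<in> carrier_vec n" and nonsingular: "1 + b \<bullet> a \<noteq> 0"
  shows "1\<^sub>m n + mat n n (\<lambda>(i, j). a $ i * b $ j) \<in> carrier (GL_group n)"
  unfolding GL_group_iff_trivial_kernel
proof (intro conjI ballI impI)
  fix v :: "'a vec" assume v: "v \<in> carrier_vec n"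
    and "(1\<^sub>m n + mat n n (\<lambda>(i, j). a $ i * b $ j)) *\<^sub>v v = 0\<^sub>v n"
  then have kernel: "v + (b \<bullet> v) \<cdot>\<^sub>v a = 0\<^sub>v n"
    using rank_one_update_mult_vec[OF a b v] by simp
  have "b \<bullet> v + (b \<bullet> v) * (b \<bullet> a) = b \<bullet> (v + (b \<bullet> v) \<cdot>\<^sub>v a)"
    using a b v by (simp add: scalar_prod_add_distrib[of _ n])
  also have "\<dots> = 0"
    using b kernel by simp
  finally have "(b \<bullet> v) * (1 + b \<bullet> a) = 0"
    by (simp add: algebra_simps)
  then have "b \<bullet> v = 0"
    using nonsingular by simp
  then show "v = 0\<^sub>v n"
    using kernel a v by (auto simp: vec_eq_iff)
qed simp

lemma orbit_unit_vec_0: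
  "orbit (GL_group (Suc n)) (mat_action (Suc n)) (unit_vec (Suc n) 0)
     = carrier_vec (Suc n) - {0\<^sub>v (Suc n) :: 'a::field vec}"
proof (intro equalityI subsetI)
  fix y :: "'a vec" assume "y \<in> orbit (GL_group (Suc n)) (mat_action (Suc n)) (unit_vec (Suc n) 0)"
  then obtain g where g: "g \<in> carrier (GL_group (Suc n))" and y: "y = g *\<^sub>v unit_vec (Suc n) 0"
    unfolding orbit_def by auto
  then show "y \<in> carrier_vec (Suc n) - {0\<^sub>v (Suc n)}"
    using g unfolding GL_group_iff_trivial_kernel by auto
next
  fix y :: "'a vec" assume "y \<in> carrier_vec (Suc n) - {0\<^sub>v (Suc n)}"
  then have y: "y \<in> carrier_vec (Suc n)" "y \<noteq> 0\<^sub>v (Suc n)" by auto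
  obtain i where i: "i < Suc n" "y $ i \<noteq> 0"
    using exists_nonzero_index[OF y] by blast
  let ?e = "\<lambda>k. unit_vec (Suc n) k :: 'a vec"
  txt \<open>With \<open>b $ 0 = 1\<close> the update \<open>1 + a b\<^sup>T\<close> sends \<open>e\<^sub>0\<close> to \<open>y\<close>, and \<open>b \<bullet> y \<noteq> 0\<close> makes it invertible.\<close>
  define a b where "a = y - ?e 0" and "b = ?e 0 + (if y $ 0 = 0 then ?e i else 0\<^sub>v (Suc n))"
  have a: "a \<in> carrier_vec (Suc n)" and b: "b \<in> carrier_vec (Suc n)"
    using y by (simp_all add: a_def b_def)
  have b0: "b \<bullet> ?e 0 = 1"
    using i b by (auto simp: b_def)
  have b_y: "b \<bullet> y \<noteq> 0"
    using i y by (auto simp: b_def add_scalar_prod_distrib[of _ "Suc n"])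
  have "1 + b \<bullet> a = b \<bullet> y"
    using y b b0 by (simp add: a_def scalar_prod_minus_distrib[of _ "Suc n"])
  then have g: "1\<^sub>m (Suc n) + mat (Suc n) (Suc n) (\<lambda>(i, j). a $ i * b $ j) \<in> carrier (GL_group (Suc n))"
    using rank_one_update_GL[OF a b] b_y by simp
  moreover have "mat_action (Suc n) (1\<^sub>m (Suc n) + mat (Suc n) (Suc n) (\<lambda>(i, j). a $ i * b $ j)) (?e 0) = y"
    using rank_one_update_mult_vec[OF a b, of "?e 0"] b0 y by (auto simp: a_def vec_eq_iff)
  ultimately show "y \<in> orbit (GL_group (Suc n)) (mat_action (Suc n)) (unit_vec (Suc n) 0)"
    unfolding orbit_def by blast
qed

section \<open>The affine group as a stabilizer\<close>

lemma mat_of_row_mult: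
  fixes x :: "'a::comm_semiring_0 vec"
  assumes x: "x \<in> carrier_vec m" and M: "M \<in> carrier_mat m n"
  shows "mat_of_row x * M = mat_of_row (transpose_mat M *\<^sub>v x)"
proof (rule eq_matI)
  fix i j assume "i < dim_row (mat_of_row (transpose_mat M *\<^sub>v x))" "j < dim_col (mat_of_row (transpose_mat M *\<^sub>v x))"
  then have i: "i = 0" and j: "j < n" using M by auto
  show "(mat_of_row x * M) $$ (i, j) = mat_of_row (transpose_mat M *\<^sub>v x) $$ (i, j)"
    using x M i j comm_scalar_prod[OF x, of "col M j"] by simp
qed (use M in simp_all)

definition affine_mat :: "nat \<Rightarrow> 'a::field vec \<Rightarrow> 'a mat \<Rightarrow> 'a mat" where
  "affine_mat n x A = four_block_mat (1\<^sub>m 1) (mat_of_row x) (0\<^sub>m n 1) A"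

lemma affine_mat_carrier:
  "x \<in> carrier_vec n \<Longrightarrow> A \<in> carrier_mat n n \<Longrightarrow> affine_mat n x A \<in> carrier_mat (Suc n) (Suc n)"
  unfolding affine_mat_def using four_block_carrier_mat[of "1\<^sub>m 1" 1 1 A n n] by simp

lemma index_affine_mat:
  assumes "x \<in> carrier_vec n" "A \<in> carrier_mat n n" "i < Suc n" "j < Suc n"
  shows "affine_mat n x A $$ (i, j) =
    (if i = 0 then if j = 0 then 1 else x $ (j - 1) else if j = 0 then 0 else A $$ (i - 1, j - 1))"
  using assms unfolding affine_mat_def by (subst index_mat_four_block) auto

lemma det_affine_mat:
  assumes "x \<in> carrier_vec n" "A \<in> carrier_mat n n"
  shows "det (affine_mat n x A) = det A"
proof -
  have "det (affine_mat n x A) = det (1\<^sub>m 1) * det A"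
    unfolding affine_mat_def by (rule det_four_block_mat_lower_left_zero_col) (use assms in auto)
  then show ?thesis by simp
qed

lemma affine_mat_mult:
  assumes x: "x \<in> carrier_vec n" and y: "y \<in> carrier_vec n"
    and A: "A \<in> carrier_mat n n" and B: "B \<in> carrier_mat n n"
  shows "affine_mat n x A * affine_mat n y B = affine_mat n (y + transpose_mat B *\<^sub>v x) (A * B)"
proof -
  have "mat_of_row y + mat_of_row (transpose_mat B *\<^sub>v x) = mat_of_row (y + transpose_mat B *\<^sub>v x)"
    using y B x by (intro eq_matI) auto
  then show ?thesis
    unfolding affine_mat_def using x y A B
    by (subst mult_four_block_mat[of _ 1 1 _ n _ n _ _ 1 _ n]) (auto simp: mat_of_row_mult)
qed

lemma affine_mat_inject:
  assumes "x \<in> carrier_vec n" "y \<in> carrier_vec n" "A \<in> carrier_mat n n" "B \<in> carrier_mat n n"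
  shows "affine_mat n x A = affine_mat n y B \<longleftrightarrow> x = y \<and> A = B"
proof
  assume eq: "affine_mat n x A = affine_mat n y B"
  have "x $ j = y $ j" if "j < n" for j
    using arg_cong[OF eq, of "\<lambda>M. M $$ (0, Suc j)"] index_affine_mat[of x n A] index_affine_mat[of y n B]
      assms that by simp
  moreover have "A $$ (i, j) = B $$ (i, j)" if "i < n" "j < n" for i j
    using arg_cong[OF eq, of "\<lambda>M. M $$ (Suc i, Suc j)"] index_affine_mat[of x n A] index_affine_mat[of y n B]
      assms that by simp
  ultimately show "x = y \<and> A = B"
    using assms by auto
qed simp

lemma affine_mat_commute_iff:
  assumes x: "x \<in> carrier_vec n" and y: "y \<in> carrier_vec n"
    and A: "A \<in> carrier_mat n n" and B: "B \<in> carrier_mat n n"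
  shows "affine_mat n x A * affine_mat n y B = affine_mat n y B * affine_mat n x A
     \<longleftrightarrow> A * B = B * A \<and> y + transpose_mat B *\<^sub>v x = x + transpose_mat A *\<^sub>v y"
  using assms by (simp add: affine_mat_mult affine_mat_inject conj_commute)

lemma carrier_AGL_group:
  "carrier (AGL_group n) = {affine_mat n x A | x A. x \<in> carrier_vec n \<and> A \<in> carrier (GL_group n)}"
proof (intro equalityI subsetI)
  fix M :: "'a::field mat" assume "M \<in> carrier (AGL_group n)"
  then obtain u A where M: "M = four_block_mat (1\<^sub>m 1) u (0\<^sub>m n 1) A"
    and u: "u \<in> carrier_mat 1 n" and A: "A \<in> carrier (GL_group n)"
    unfolding AGL_group_def by auto
  have "u = mat_of_row (row u 0)"
    using u by (intro eq_matI) auto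
  then have "M = affine_mat n (row u 0) A"
    unfolding M affine_mat_def by simp
  moreover have "row u 0 \<in> carrier_vec n"
    using u by (intro carrier_vecI) simp
  ultimately show "M \<in> {affine_mat n x A | x A. x \<in> carrier_vec n \<and> A \<in> carrier (GL_group n)}"
    using A by blast
next
  fix M :: "'a mat" assume "M \<in> {affine_mat n x A | x A. x \<in> carrier_vec n \<and> A \<in> carrier (GL_group n)}"
  then show "M \<in> carrier (AGL_group n)"
    unfolding AGL_group_def affine_mat_def by auto
qed

lemma affine_mat_mult_unit_vec_0:
  assumes x: "x \<in> carrier_vec n" and A: "A \<in> carrier_mat n n"
  shows "affine_mat n x A *\<^sub>v unit_vec (Suc n) 0 = unit_vec (Suc n) 0"
proof (rule eq_vecI)
  fix i assume "i < dim_vec (unit_vec (Suc n) 0 :: 'a vec)"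
  then have i: "i < Suc n" by simp
  then show "(affine_mat n x A *\<^sub>v unit_vec (Suc n) 0) $ i = unit_vec (Suc n) 0 $ i"
    using affine_mat_carrier[OF x A] index_affine_mat[OF x A i, of 0] by simp
qed (use affine_mat_carrier[OF x A] in simp)

lemma fixes_unit_vec_0_imp_affine_mat:
  assumes M: "M \<in> carrier_mat (Suc n) (Suc n)" and fixes_e0: "M *\<^sub>v unit_vec (Suc n) 0 = unit_vec (Suc n) 0"
  shows "M = affine_mat n (vec n (\<lambda>j. M $$ (0, Suc j))) (mat n n (\<lambda>(i, j). M $$ (Suc i, Suc j)))"
    (is "M = affine_mat n ?x ?A")
proof -
  have x: "?x \<in> carrier_vec n" and A: "?A \<in> carrier_mat n n"
    by simp_all
  show ?thesis
  proof (rule eq_matI)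
    fix i j assume "i < dim_row (affine_mat n ?x ?A)" "j < dim_col (affine_mat n ?x ?A)"
    then have i: "i < Suc n" and j: "j < Suc n"
      using affine_mat_carrier[OF x A] by auto
    have "M $$ (i, 0) = (if i = 0 then 1 else 0)"
      using arg_cong[OF fixes_e0, of "\<lambda>v. v $ i"] M i by simp
    then show "M $$ (i, j) = affine_mat n ?x ?A $$ (i, j)"
      using i j index_affine_mat[OF x A i j] by (cases i; cases j) auto
  qed (use M affine_mat_carrier[OF x A] in auto)
qed

lemma GL_stabilizer_unit_vec_0:
  "GL_stabilizer (Suc n) (unit_vec (Suc n) 0) = carrier (AGL_group n :: 'a::field mat monoid)"
proof (intro equalityI subsetI)
  fix M :: "'a mat" assume "M \<in> GL_stabilizer (Suc n) (unit_vec (Suc n) 0)"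
  then have M: "M \<in> carrier_mat (Suc n) (Suc n)" "det M \<noteq> 0" "M *\<^sub>v unit_vec (Suc n) 0 = unit_vec (Suc n) 0"
    unfolding stabilizer_def carrier_GL_group by auto
  define x A where "x = vec n (\<lambda>j. M $$ (0, Suc j))" and "A = mat n n (\<lambda>(i, j). M $$ (Suc i, Suc j))"
  have x: "x \<in> carrier_vec n" and A: "A \<in> carrier_mat n n"
    by (simp_all add: x_def A_def)
  have "M = affine_mat n x A"
    unfolding x_def A_def by (rule fixes_unit_vec_0_imp_affine_mat[OF M(1,3)])
  moreover have "A \<in> carrier (GL_group n)"
    using M(2) A det_affine_mat[OF x A] calculation unfolding carrier_GL_group by simp
  ultimately show "M \<in> carrier (AGL_group n)"
    unfolding carrier_AGL_group using x by blast
next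
  fix M :: "'a mat" assume "M \<in> carrier (AGL_group n)"
  then obtain x A where M: "M = affine_mat n x A" and x: "x \<in> carrier_vec n" and A: "A \<in> carrier (GL_group n)"
    unfolding carrier_AGL_group by blast
  have A': "A \<in> carrier_mat n n" "det A \<noteq> 0"
    using A unfolding carrier_GL_group by auto
  have "M \<in> carrier (GL_group (Suc n))"
    unfolding M carrier_GL_group using affine_mat_carrier[OF x A'(1)] det_affine_mat[OF x A'(1)] A' by simp
  then show "M \<in> GL_stabilizer (Suc n) (unit_vec (Suc n) 0)"
    unfolding stabilizer_def M using affine_mat_mult_unit_vec_0[OF x A'(1)] by simp
qed

lemma AGL_group_eq_stabilizer:
  "AGL_group n = (GL_group (Suc n))
     \<lparr>carrier := GL_stabilizer (Suc n) (unit_vec (Suc n) 0 :: 'a::field vec)\<rparr>"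
  unfolding GL_stabilizer_unit_vec_0 by (simp add: AGL_group_def GL_group_def)

lemma group_AGL_group: "group (AGL_group n :: 'a::field mat monoid)"
  unfolding AGL_group_eq_stabilizer
  by (intro subgroup.subgroup_is_group group_GL_group group_action.stabilizer_subgroup[OF group_action_mat_action])
    simp

lemma finite_carrier_AGL_group: "finite (carrier (AGL_group n :: 'a::{finite,field} mat monoid))"
  unfolding GL_stabilizer_unit_vec_0[symmetric] stabilizer_def
  by (rule finite_subset[of _ "carrier (GL_group (Suc n))"]) (auto simp: finite_carrier_GL_group)

lemma order_AGL_group:
  "order (AGL_group n :: 'a::{finite,field} mat monoid) = CARD('a) ^ n * order (GL_group n :: 'a mat monoid)"
proof -
  let ?affine = "\<lambda>(x, A). affine_mat n x A :: 'a mat"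
  have "carrier (AGL_group n) = ?affine ` (carrier_vec n \<times> carrier (GL_group n))"
    unfolding carrier_AGL_group by auto
  moreover have "inj_on ?affine (carrier_vec n \<times> carrier (GL_group n))"
    by (rule inj_onI) (auto simp: affine_mat_inject carrier_GL_group)
  ultimately show ?thesis
    unfolding order_def by (simp add: card_image card_cartesian_product card_carrier_vec)
qed

section \<open>Counting commuting pairs in the affine group\<close>

lemma card_commuting_translations:
  fixes A B :: "'a::{finite,field} mat"
  assumes A: "A \<in> carrier_mat n n" and B: "B \<in> carrier_mat n n"
  shows "card {(x, y) \<in> carrier_vec n \<times> carrier_vec n. y + transpose_mat B *\<^sub>v x = x + transpose_mat A *\<^sub>v y}
       = CARD('a) ^ n * card {z \<in> carrier_vec n. A *\<^sub>v z = z \<and> B *\<^sub>v z = z}"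
proof -
  have shifted: "transpose_mat (C - 1\<^sub>m n) *\<^sub>v v = transpose_mat C *\<^sub>v v - v"
    "transpose_mat (1\<^sub>m n - C) *\<^sub>v v = v - transpose_mat C *\<^sub>v v"
    "(C - 1\<^sub>m n) *\<^sub>v v = C *\<^sub>v v - v" "(1\<^sub>m n - C) *\<^sub>v v = v - C *\<^sub>v v"
    if C: "C \<in> carrier_mat n n" and v: "v \<in> carrier_vec n" for C :: "'a mat" and v
    using C v transpose_minus[OF C one_carrier_mat] transpose_minus[OF one_carrier_mat C]
    by (simp_all add: minus_mult_distrib_mat_vec[of _ n n])
  have "y + transpose_mat B *\<^sub>v x = x + transpose_mat A *\<^sub>v y
      \<longleftrightarrow> transpose_mat (B - 1\<^sub>m n) *\<^sub>v x + transpose_mat (1\<^sub>m n - A) *\<^sub>v y = 0\<^sub>v n"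
    if x: "x \<in> carrier_vec n" and y: "y \<in> carrier_vec n" for x y
  proof -
    define u v where "u = transpose_mat B *\<^sub>v x" and "v = transpose_mat A *\<^sub>v y"
    have "u \<in> carrier_vec n" "v \<in> carrier_vec n"
      using A B x y by (simp_all add: u_def v_def)
    then have "y + u = x + v \<longleftrightarrow> (u - x) + (y - v) = 0\<^sub>v n"
      using x y by (auto simp: vec_eq_iff algebra_simps)
    then show ?thesis
      using A B x y by (simp add: shifted u_def v_def)
  qed
  then have "{(x, y) \<in> carrier_vec n \<times> carrier_vec n. y + transpose_mat B *\<^sub>v x = x + transpose_mat A *\<^sub>v y}
      = {(x, y) \<in> carrier_vec n \<times> carrier_vec n.
           transpose_mat (B - 1\<^sub>m n) *\<^sub>v x + transpose_mat (1\<^sub>m n - A) *\<^sub>v y = 0\<^sub>v n}"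
    by auto
  moreover have "{z \<in> carrier_vec n. (B - 1\<^sub>m n) *\<^sub>v z = 0\<^sub>v n \<and> (1\<^sub>m n - A) *\<^sub>v z = 0\<^sub>v n}
      = {z \<in> carrier_vec n. A *\<^sub>v z = z \<and> B *\<^sub>v z = z}"
    using A B by (auto simp: shifted minus_eq_zero_vec_iff[of _ n])
  moreover have "B - 1\<^sub>m n \<in> carrier_mat n n" "1\<^sub>m n - A \<in> carrier_mat n n"
    using A B by auto
  ultimately show ?thesis
    using card_kernel_transpose_append_rows[of "B - 1\<^sub>m n" n n "1\<^sub>m n - A" n]
    by (simp add: power_add mult.commute)
qed

lemma commuting_pairs_AGL_group_eq_image:
  "commuting_pairs (AGL_group n) (carrier (AGL_group n))
     = (\<lambda>((A, B), (x, y)). (affine_mat n x A, affine_mat n y B)) `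
         (SIGMA (A, B):commuting_pairs (GL_group n) (carrier (GL_group n :: 'a::field mat monoid)).
            {(x, y) \<in> carrier_vec n \<times> carrier_vec n. y + transpose_mat B *\<^sub>v x = x + transpose_mat A *\<^sub>v y})"
  (is "_ = ?F ` Sigma ?C ?T")
proof (intro equalityI subsetI)
  fix p :: "'a mat \<times> 'a mat" assume "p \<in> commuting_pairs (AGL_group n) (carrier (AGL_group n))"
  then obtain x A y B where p: "p = (affine_mat n x A, affine_mat n y B)"
    and x: "x \<in> carrier_vec n" and A: "A \<in> carrier (GL_group n)"
    and y: "y \<in> carrier_vec n" and B: "B \<in> carrier (GL_group n)"
    and "affine_mat n x A * affine_mat n y B = affine_mat n y B * affine_mat n x A"
    unfolding commuting_pairs_def carrier_AGL_group by (auto simp: AGL_group_def)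
  then have "((A, B), (x, y)) \<in> Sigma ?C ?T"
    using affine_mat_commute_iff[OF x y GL_group_carrier_mat[OF A] GL_group_carrier_mat[OF B]] unfolding commuting_pairs_def by auto
  then show "p \<in> ?F ` Sigma ?C ?T"
    unfolding p by (rule rev_image_eqI) simp
next
  fix p :: "'a mat \<times> 'a mat" assume "p \<in> ?F ` Sigma ?C ?T"
  then obtain x A y B where p: "p = (affine_mat n x A, affine_mat n y B)"
    and "((A, B), (x, y)) \<in> Sigma ?C ?T" by auto
  then have x: "x \<in> carrier_vec n" and A: "A \<in> carrier (GL_group n)"
    and y: "y \<in> carrier_vec n" and B: "B \<in> carrier (GL_group n)"
    and "A * B = B * A" "y + transpose_mat B *\<^sub>v x = x + transpose_mat A *\<^sub>v y"
    unfolding commuting_pairs_def by auto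
  then show "p \<in> commuting_pairs (AGL_group n) (carrier (AGL_group n))"
    using affine_mat_commute_iff[OF x y GL_group_carrier_mat[OF A] GL_group_carrier_mat[OF B]] unfolding p commuting_pairs_def carrier_AGL_group
    by (auto simp: AGL_group_def)
qed

lemma card_commuting_pairs_AGL_group:
  "card (commuting_pairs (AGL_group n :: 'a::{finite,field} mat monoid) (carrier (AGL_group n)))
     = CARD('a) ^ n * (\<Sum>(A, B)\<in>commuting_pairs (GL_group n) (carrier (GL_group n)).
         card {z \<in> carrier_vec n. A *\<^sub>v z = z \<and> B *\<^sub>v z = (z :: 'a vec)})"
proof -
  let ?C = "commuting_pairs (GL_group n) (carrier (GL_group n :: 'a mat monoid))"
  let ?T = "\<lambda>(A, B). {(x, y) \<in> carrier_vec n \<times> carrier_vec n. y + transpose_mat B *\<^sub>v x = x + transpose_mat A *\<^sub>v y}"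
  let ?F = "\<lambda>((A, B), (x, y)). (affine_mat n x A, affine_mat n y B)"
  have "inj_on ?F (Sigma ?C ?T)"
    by (rule inj_onI) (auto simp: commuting_pairs_def affine_mat_inject GL_group_carrier_mat)
  then have "card (commuting_pairs (AGL_group n :: 'a mat monoid) (carrier (AGL_group n))) = card (Sigma ?C ?T)"
    unfolding commuting_pairs_AGL_group_eq_image by (rule card_image)
  also have "\<dots> = (\<Sum>p\<in>?C. card (?T p))"
  proof (rule card_SigmaI)
    show "finite ?C"
      by (rule finite_subset[of _ "carrier (GL_group n) \<times> carrier (GL_group n)"])
        (auto simp: commuting_pairs_def finite_carrier_GL_group)
    show "\<forall>p\<in>?C. finite (?T p)"
      by (auto intro: finite_subset[of _ "carrier_vec n \<times> carrier_vec n"])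
  qed
  also have "\<dots> = (\<Sum>(A, B)\<in>?C. CARD('a) ^ n * card {z \<in> carrier_vec n. A *\<^sub>v z = z \<and> B *\<^sub>v z = z})"
  proof (rule sum.cong[OF refl])
    fix p assume "p \<in> ?C"
    then obtain A B where p: "p = (A, B)" and "A \<in> carrier_mat n n" "B \<in> carrier_mat n n"
      unfolding commuting_pairs_def using GL_group_carrier_mat by auto
    then show "card (?T p) = (case p of (A, B) \<Rightarrow> CARD('a) ^ n * card {z \<in> carrier_vec n. A *\<^sub>v z = z \<and> B *\<^sub>v z = z})"
      using card_commuting_translations by simp
  qed
  finally show ?thesis
    by (simp add: sum_distrib_left case_prod_unfold)
qed

lemma card_conj_classes_AGL_group_mult_order:
  "card (conj_classes (AGL_group n :: 'a::{finite,field} mat monoid)) * order (GL_group n :: 'a mat monoid)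
     = (\<Sum>z\<in>carrier_vec n. card (commuting_pairs (GL_group n) (GL_stabilizer n (z :: 'a vec))))"
proof -
  interpret GL_action: group_action "GL_group n :: 'a mat monoid" "carrier_vec n" "mat_action n"
    by (rule group_action_mat_action)
  let ?C = "commuting_pairs (GL_group n) (carrier (GL_group n :: 'a mat monoid))"
  have fixed_points: "{z \<in> carrier_vec n. mat_action n A z = z \<and> mat_action n B z = z}
      = {z \<in> carrier_vec n. A *\<^sub>v z = z \<and> B *\<^sub>v z = z}" for A B :: "'a mat"
    by auto
  have "CARD('a) ^ n * (card (conj_classes (AGL_group n :: 'a mat monoid)) * order (GL_group n :: 'a mat monoid))
      = card (conj_classes (AGL_group n :: 'a mat monoid)) * order (AGL_group n :: 'a mat monoid)"
    by (simp add: order_AGL_group)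
  also have "\<dots> = card (commuting_pairs (AGL_group n) (carrier (AGL_group n :: 'a mat monoid)))"
    by (rule group.card_conj_classes_mult_order[OF group_AGL_group finite_carrier_AGL_group])
  also have "\<dots> = CARD('a) ^ n * (\<Sum>(A, B)\<in>?C. card {z \<in> carrier_vec n. A *\<^sub>v z = z \<and> B *\<^sub>v z = z})"
    by (rule card_commuting_pairs_AGL_group)
  also have "(\<Sum>(A, B)\<in>?C. card {z \<in> carrier_vec n. A *\<^sub>v z = z \<and> B *\<^sub>v z = z})
      = (\<Sum>z\<in>carrier_vec n. card (commuting_pairs (GL_group n) (GL_stabilizer n (z :: 'a vec))))"
    using GL_action.sum_card_common_invariants[OF finite_carrier_GL_group finite_carrier_vec]
    by (simp add: fixed_points)
  finally show ?thesis
    by simp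
qed

lemma sum_card_commuting_pairs_stabilizers:
  "(\<Sum>z\<in>carrier_vec n. card (commuting_pairs (GL_group n) (GL_stabilizer n (z :: 'a::{finite,field} vec))))
     = card (conj_classes (GL_group n :: 'a mat monoid)) * order (GL_group n :: 'a mat monoid)
       + (\<Sum>z\<in>carrier_vec n - {0\<^sub>v n}. card (commuting_pairs (GL_group n) (GL_stabilizer n (z :: 'a vec))))"
proof -
  have "(\<Sum>z\<in>carrier_vec n. card (commuting_pairs (GL_group n) (GL_stabilizer n (z :: 'a vec))))
      = card (commuting_pairs (GL_group n) (GL_stabilizer n (0\<^sub>v n :: 'a vec)))
        + (\<Sum>z\<in>carrier_vec n - {0\<^sub>v n}. card (commuting_pairs (GL_group n) (GL_stabilizer n (z :: 'a vec))))"
    by (rule sum.remove) simp_all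
  moreover have "card (commuting_pairs (GL_group n) (carrier (GL_group n :: 'a mat monoid)))
      = card (conj_classes (GL_group n :: 'a mat monoid)) * order (GL_group n :: 'a mat monoid)"
    by (rule group.card_conj_classes_mult_order[OF group_GL_group finite_carrier_GL_group, symmetric])
  ultimately show ?thesis
    by (simp add: GL_stabilizer_zero_vec)
qed

lemma sum_card_commuting_pairs_stabilizers_nonzero:
  "(\<Sum>z\<in>carrier_vec (Suc n) - {0\<^sub>v (Suc n)}.
      card (commuting_pairs (GL_group (Suc n)) (GL_stabilizer (Suc n) (z :: 'a::{finite,field} vec))))
     = card (conj_classes (AGL_group n :: 'a mat monoid)) * order (GL_group (Suc n) :: 'a mat monoid)"
proof -
  interpret GL_action: group_action "GL_group (Suc n) :: 'a mat monoid" "carrier_vec (Suc n)" "mat_action (Suc n)"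
    by (rule group_action_mat_action)
  let ?e = "unit_vec (Suc n) 0 :: 'a vec"
  let ?orbit = "orbit (GL_group (Suc n)) (mat_action (Suc n)) ?e"
  have "(\<Sum>z\<in>carrier_vec (Suc n) - {0\<^sub>v (Suc n)}. card (commuting_pairs (GL_group (Suc n)) (GL_stabilizer (Suc n) (z :: 'a vec))))
      = (\<Sum>z\<in>?orbit. card (commuting_pairs (GL_group (Suc n)) (GL_stabilizer (Suc n) ?e)))"
    unfolding orbit_unit_vec_0[symmetric]
    by (intro sum.cong refl GL_action.card_commuting_pairs_stabilizer_orbit) simp_all
  also have "\<dots> = card ?orbit * card (commuting_pairs (AGL_group n) (carrier (AGL_group n :: 'a mat monoid)))"
    unfolding GL_stabilizer_unit_vec_0 by (simp add: commuting_pairs_def AGL_group_def)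
  also have "\<dots> = card ?orbit * (card (conj_classes (AGL_group n :: 'a mat monoid)) * card (GL_stabilizer (Suc n) ?e))"
  proof -
    have "card (conj_classes (AGL_group n :: 'a mat monoid)) * order (AGL_group n :: 'a mat monoid)
        = card (commuting_pairs (AGL_group n) (carrier (AGL_group n :: 'a mat monoid)))"
      by (rule group.card_conj_classes_mult_order[OF group_AGL_group finite_carrier_AGL_group])
    then show ?thesis
      unfolding GL_stabilizer_unit_vec_0 order_def by simp
  qed
  also have "\<dots> = card (conj_classes (AGL_group n :: 'a mat monoid)) * order (GL_group (Suc n) :: 'a mat monoid)"
    using GL_action.orbit_stabilizer_theorem[of ?e] by simp
  finally show ?thesis .
qed

lemma card_conj_classes_AGL_group_0:
  "card (conj_classes (AGL_group 0 :: 'a::{finite,field} mat monoid)) = card (conj_classes (GL_group 0 :: 'a mat monoid))"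
proof -
  have "carrier_vec 0 = {0\<^sub>v 0 :: 'a vec}"
    by (auto simp: vec_eq_iff)
  then have "card (conj_classes (AGL_group 0 :: 'a mat monoid)) * order (GL_group 0 :: 'a mat monoid)
      = card (conj_classes (GL_group 0 :: 'a mat monoid)) * order (GL_group 0 :: 'a mat monoid)"
    using card_conj_classes_AGL_group_mult_order[where 'a = 'a and n = 0]
      sum_card_commuting_pairs_stabilizers[where 'a = 'a and n = 0]
    by simp
  then show ?thesis
    using order_GL_group_pos[where 'a = 'a and n = 0] by simp
qed

lemma card_conj_classes_AGL_group_Suc:
  "card (conj_classes (AGL_group (Suc n) :: 'a::{finite,field} mat monoid))
     = card (conj_classes (GL_group (Suc n) :: 'a mat monoid)) + card (conj_classes (AGL_group n :: 'a mat monoid))"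
proof -
  have "card (conj_classes (AGL_group (Suc n) :: 'a mat monoid)) * order (GL_group (Suc n) :: 'a mat monoid)
      = (card (conj_classes (GL_group (Suc n) :: 'a mat monoid)) + card (conj_classes (AGL_group n :: 'a mat monoid)))
        * order (GL_group (Suc n) :: 'a mat monoid)"
    using card_conj_classes_AGL_group_mult_order[where 'a = 'a and n = "Suc n"]
      sum_card_commuting_pairs_stabilizers[where 'a = 'a and n = "Suc n"]
      sum_card_commuting_pairs_stabilizers_nonzero[where 'a = 'a and n = n]
    by (simp add: algebra_simps)
  then show ?thesis
    using order_GL_group_pos[where 'a = 'a and n = "Suc n"] by simp
qed

theorem mainTheorem12:
  fixes n :: nat
  shows "card (conj_classes (AGL_group n :: 'a::{finite,field} mat monoid))
         = (\<Sum>j\<le>n. card (conj_classes (GL_group j :: 'a mat monoid)))"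
  by (induction n) (simp_all add: card_conj_classes_AGL_group_0 card_conj_classes_AGL_group_Suc)

end
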